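(* Let $u\in V$ be quasiprimary of weight $N\ge1$, let $f_0(x),\dots,f_{2N-2}(x)$ be arbitrary Laurent series, and put $\psi^{(0)}_N(x,y)=\frac1{x-y}+\sum_{\ell=0}^{2N-2}f_\ell(x)y^\ell$. Then for all $v_1,\dots,v_n\in V$, \[ Z^{(0)}(u,x;v_1,y_1;\dots;v_n,y_n)=\sum_{k=1}^n\sum_{j\ge0}\partial^{(0,j)}\psi^{(0)}_N(x,y_k)\,Z^{(0)}(v_1,y_1;\dots;u(j)v_k,y_k;\dots;v_n,y_n). \]
   Context: $V=\bigoplus_{n\ge0}V_n$ is a simple, self-dual vertex operator algebra (VOA) of strong CFT type ($V_0=\mathbb C\mathbb 1$, $L(1)V_1=0$), with vertex operators $Y(u,z)=\sum_{n\in\mathbb Z}u(n)z^{-n-1}$, Virasoro modes $L(n)$, and $\mathrm{wt}(v)=n$ for $v\in V_n$. A vector $u$ is quasiprimary if $L(1)u=0$. $\langle\cdot,\cdot\rangle$ is the unique invariant nondegenerate bilinear form on $V$ (Li–Zamolodchikov metric) with $\langle\mathbb 1,\mathbb 1\rangle=1$, invariant meaning $\langle Y(u,z)v,w\rangle=\langle v,Y(e^{zL(1)}(-z^{-2})^{L(0)}u,1/z)w\rangle$. The genus zero $n$-point function is $Z^{(0)}(v_1,y_1;\dots;v_n,y_n)=\langle \mathbb 1,Y(v_1,y_1)\cdots Y(v_n,y_n)\mathbb 1\rangle$. Notation: $\partial^{(j)}_y=\frac1{j!}\partial_y^j$ and $\partial^{(i,j)}F(x,y)=\partial_x^{(i)}\partial_y^{(j)}F(x,y)$;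 negative powers of binomials such as $\frac1{x-y}$ are expanded using $(x+y)^m=\sum_{k\ge0}\binom mk x^{m-k}y^k$. *)

theory Defs
  imports Complex_Main
begin

text \<open>Sum of a family over its support; used for the sums over i \<ge> 0, j \<ge> 0, m \<ge> 0
  in the VOA axioms and in the theorem, all of which have finite support
  (truncation / grading).\<close>
definition fsum :: "('i \<Rightarrow> 'a::comm_monoid_add) \<Rightarrow> 'a" where
  "fsum g = sum g {i. g i \<noteq> 0}"

text \<open>Data: scalar multiplication sc on the carrier type 'v, modes md u n v = u(n)v,
  vacuum vac, conformal vector om, central charge cc.\<close>

definition Vir :: "('v \<Rightarrow> int \<Rightarrow> 'v \<Rightarrow> 'v) \<Rightarrow> 'v \<Rightarrow> int \<Rightarrow> 'v \<Rightarrow> 'v" where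
  "Vir md om n = md om (n + 1)"

definition wt_space ::
  "(complex \<Rightarrow> 'v \<Rightarrow> 'v) \<Rightarrow> ('v \<Rightarrow> int \<Rightarrow> 'v \<Rightarrow> 'v) \<Rightarrow> 'v \<Rightarrow> nat \<Rightarrow> 'v set" where
  "wt_space sc md om k = {v. Vir md om 0 v = sc (of_nat k) v}"

definition is_VOA ::
  "(complex \<Rightarrow> 'v::ab_group_add \<Rightarrow> 'v) \<Rightarrow> ('v \<Rightarrow> int \<Rightarrow> 'v \<Rightarrow> 'v) \<Rightarrow> 'v \<Rightarrow> 'v \<Rightarrow> complex \<Rightarrow> bool" where
  "is_VOA sc md vac om cc \<longleftrightarrow>
     vector_space sc \<and>
     (\<forall>u n. Vector_Spaces.linear sc sc (md u n)) \<and>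
     (\<forall>v n. Vector_Spaces.linear sc sc (\<lambda>u. md u n v)) \<and>
     \<comment> \<open>truncation\<close>
     (\<forall>u v. \<exists>M. \<forall>n\<ge>M. md u n v = 0) \<and>
     \<comment> \<open>vacuum axioms\<close>
     (\<forall>n v. md vac n v = (if n = -1 then v else 0)) \<and>
     (\<forall>u. md u (-1) vac = u \<and> (\<forall>n\<ge>0. md u n vac = 0)) \<and>
     \<comment> \<open>Borcherds (Jacobi) identity in modes\<close>
     (\<forall>u v w p q r.
        fsum (\<lambda>i::nat. sc (of_int p gchoose i) (md (md u (r + int i) v) (p + q - int i) w)) =
        fsum (\<lambda>i::nat. sc ((-1) ^ i * (of_int r gchoose i))
               (md u (p + r - int i) (md v (q + int i) w)
                - sc ((-1::complex) powi r) (md v (q + r - int i) (md u (p + int i) w))))) \<and>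
     \<comment> \<open>Virasoro relations\<close>
     (\<forall>m n v. Vir md om m (Vir md om n v) - Vir md om n (Vir md om m v) =
        sc (of_int (m - n)) (Vir md om (m + n) v)
        + (if m + n = 0 then sc (of_int (m ^ 3 - m) / 12 * cc) v else 0)) \<and>
     \<comment> \<open>L(-1)-derivative property: Y(L(-1)u,z) = d/dz Y(u,z)\<close>
     (\<forall>u n v. md (Vir md om (-1) u) n v = sc (- of_int n) (md u (n - 1) v)) \<and>
     \<comment> \<open>grading V = direct sum of L(0)-eigenspaces V_n, n \<ge> 0, each finite dimensional\<close>
     (\<forall>v. \<exists>S g. finite S \<and> (\<forall>k\<in>S. g k \<in> wt_space sc md om k) \<and> v = sum g S) \<and>
     (\<forall>k. \<exists>B. finite B \<and> wt_space sc md om k \<subseteq> module.span sc B) \<and>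
     om \<in> wt_space sc md om 2"

definition strong_CFT_type ::
  "(complex \<Rightarrow> 'v::ab_group_add \<Rightarrow> 'v) \<Rightarrow> ('v \<Rightarrow> int \<Rightarrow> 'v \<Rightarrow> 'v) \<Rightarrow> 'v \<Rightarrow> 'v \<Rightarrow> bool" where
  "strong_CFT_type sc md vac om \<longleftrightarrow>
     wt_space sc md om 0 = module.span sc {vac} \<and>
     (\<forall>v\<in>wt_space sc md om 1. Vir md om 1 v = 0)"

definition VOA_ideal ::
  "(complex \<Rightarrow> 'v::ab_group_add \<Rightarrow> 'v) \<Rightarrow> ('v \<Rightarrow> int \<Rightarrow> 'v \<Rightarrow> 'v) \<Rightarrow> 'v set \<Rightarrow> bool" where
  "VOA_ideal sc md I \<longleftrightarrow> module.subspace sc I \<and>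
     (\<forall>u w n. w \<in> I \<longrightarrow> md u n w \<in> I \<and> md w n u \<in> I)"

definition simple_VOA ::
  "(complex \<Rightarrow> 'v::ab_group_add \<Rightarrow> 'v) \<Rightarrow> ('v \<Rightarrow> int \<Rightarrow> 'v \<Rightarrow> 'v) \<Rightarrow> bool" where
  "simple_VOA sc md \<longleftrightarrow> (\<exists>v::'v. v \<noteq> 0) \<and>
     (\<forall>I. VOA_ideal sc md I \<longrightarrow> I = {0} \<or> I = UNIV)"

text \<open>Invariant bilinear form, invariance written out in modes for homogeneous u:
  <u(n)v,w> = (-1)^k sum_{m\<ge>0} 1/m! <v, (L(1)^m u)(2k-n-m-2) w>  for u \<in> V_k,
  which is the coefficient of z^(-n-1) in the defining invariance identity.\<close>
definition invariant_form ::
  "(complex \<Rightarrow> 'v::ab_group_add \<Rightarrow> 'v) \<Rightarrow> ('v \<Rightarrow> int \<Rightarrow> 'v \<Rightarrow> 'v) \<Rightarrow> 'v \<Rightarrow> ('v \<Rightarrow> 'v \<Rightarrow> complex) \<Rightarrow> bool" where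
  "invariant_form sc md om bf \<longleftrightarrow>
     (\<forall>v. Vector_Spaces.linear sc (*) (bf v)) \<and>
     (\<forall>w. Vector_Spaces.linear sc (*) (\<lambda>v. bf v w)) \<and>
     (\<forall>k u n v w. u \<in> wt_space sc md om k \<longrightarrow>
        bf (md u n v) w =
        (-1) ^ k * fsum (\<lambda>m::nat.
           bf v (md ((Vir md om 1 ^^ m) u) (2 * int k - n - int m - 2) w) / of_nat (fact m)))"

text \<open>The Li--Zamolodchikov metric: invariant, nondegenerate, normalised by <1,1> = 1.
  (Its existence is the self-duality hypothesis; it is then unique.)\<close>
definition LZ_metric ::
  "(complex \<Rightarrow> 'v::ab_group_add \<Rightarrow> 'v) \<Rightarrow> ('v \<Rightarrow> int \<Rightarrow> 'v \<Rightarrow> 'v) \<Rightarrow> 'v \<Rightarrow> 'v \<Rightarrow> ('v \<Rightarrow> 'v \<Rightarrow> complex) \<Rightarrow> bool" where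
  "LZ_metric sc md vac om bf \<longleftrightarrow>
     invariant_form sc md om bf \<and>
     (\<forall>v. (\<forall>w. bf v w = 0) \<longrightarrow> v = 0) \<and>
     (\<forall>w. (\<forall>v. bf v w = 0) \<longrightarrow> w = 0) \<and>
     bf vac vac = 1"

text \<open>A formal series in variables z_1..z_m is represented by its coefficient function
  on exponent lists: F es = coefficient of z_1^(es!0) ... z_m^(es!(m-1)).
  Genus zero n-point function <1, Y(v_1,y_1)...Y(v_n,y_n) 1>: the coefficient of
  y_1^(e_1)...y_n^(e_n) is <1, v_1(-e_1-1) ... v_n(-e_n-1) 1>.\<close>
definition Z0 ::
  "('v \<Rightarrow> int \<Rightarrow> 'v \<Rightarrow> 'v) \<Rightarrow> 'v \<Rightarrow> ('v \<Rightarrow> 'v \<Rightarrow> complex) \<Rightarrow> 'v list \<Rightarrow> int list \<Rightarrow> complex" where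
  "Z0 md vac bf vs es = bf vac (foldr (\<lambda>(v, e) w. md v (- e - 1) w) (zip vs es) vac)"

text \<open>Two-variable series G(x,y) as coefficient functions G p q (coefficient of x^p y^q).
  Expansion of 1/(x-y) = sum_{i\<ge>0} x^(-i-1) y^i.\<close>
definition inv_diff :: "int \<Rightarrow> int \<Rightarrow> complex" where
  "inv_diff p q = (if 0 \<le> q \<and> p = - q - 1 then 1 else 0)"

text \<open>psi_N^(0)(x,y) = 1/(x-y) + sum_{l=0}^{2N-2} f_l(x) y^l, with f l p the coefficient of
  x^p in f_l(x).\<close>
definition psi0 :: "(nat \<Rightarrow> int \<Rightarrow> complex) \<Rightarrow> nat \<Rightarrow> int \<Rightarrow> int \<Rightarrow> complex" where
  "psi0 f N p q = inv_diff p q + (if 0 \<le> q \<and> q \<le> 2 * int N - 2 then f (nat q) p else 0)"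

text \<open>Divided derivative in the second variable: d^(0,j), using
  d_y^(j) y^m = binom(m,j) y^(m-j).\<close>
definition dy :: "nat \<Rightarrow> (int \<Rightarrow> int \<Rightarrow> complex) \<Rightarrow> int \<Rightarrow> int \<Rightarrow> complex" where
  "dy j G p q = (of_int (q + int j) gchoose j) * G p (q + int j)"

text \<open>Product of G(x, y_k) (y := y_k, k zero-based) with a series H(y_1..y_n), giving a
  series in (x, y_1, ..., y_n); exponent list = x-exponent # y-exponents.\<close>
definition mult_at :: "nat \<Rightarrow> (int \<Rightarrow> int \<Rightarrow> complex) \<Rightarrow> (int list \<Rightarrow> complex) \<Rightarrow> int list \<Rightarrow> complex" where
  "mult_at k G H es = fsum (\<lambda>q::int. G (hd es) q * H ((tl es)[k := tl es ! k - q]))"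

end

theory Submission
  imports Defs
begin

text \<open>Write \<open>W\<close> for the state \<open>Y(v_1,y_1) \<cdots> Y(v_n,y_n) \<one>\<close>, so that
  \<open>Z(u,x; v_1,y_1; \<dots>) = \<langle>\<one>, Y(u,x) W\<rangle>\<close>. Invariance of the form moves the mode \<open>u(n)\<close> onto
  the vacuum as \<open>u(2N-2-n)\<close>, with no \<open>L(1)\<close>-corrections since \<open>u\<close> is quasiprimary; hence
  \<open>\<langle>\<one>, u(n) W\<rangle> = 0\<close> for all \<open>n \<le> 2N-2\<close>. So only the modes \<open>u(n)\<close>, \<open>n \<ge> 0\<close>, contribute,
  and these are moved through the \<open>Y(v_k,y_k)\<close> by the commutator formula
  \<open>[u(n), Y(v,y)] = \<Sum>_j \<partial>_y^(j) y^n Y(u(j)v,y)\<close> until they annihilate the vacuum; this is the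
  \<open>1/(x-y_k)\<close> part of \<open>\<psi>\<close>. The part \<open>f_l(x) y^l\<close> of \<open>\<psi>\<close> contributes the same expression
  for \<open>\<langle>\<one>, u(l) W\<rangle>\<close> with \<open>l \<le> 2N-2\<close>, which vanishes.\<close>

lemma fsum_eq_sum:
  "finite S \<Longrightarrow> (\<And>x. x \<notin> S \<Longrightarrow> g x = 0) \<Longrightarrow> fsum g = sum g S"
  unfolding fsum_def by (rule sum.mono_neutral_left) auto

definition mode_state :: "('v \<Rightarrow> int \<Rightarrow> 'v \<Rightarrow> 'v) \<Rightarrow> 'v \<Rightarrow> 'v list \<Rightarrow> int list \<Rightarrow> 'v" where
  "mode_state md vac vs es = foldr (\<lambda>(v, e) w. md v (- e - 1) w) (zip vs es) vac"

lemma mode_state_simps [simp]: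
  "mode_state md vac [] es = vac"
  "mode_state md vac (v # vs) (e # es) = md v (- e - 1) (mode_state md vac vs es)"
  by (simp_all add: mode_state_def)

lemma Z0_eq_mode_state: "Z0 md vac bf vs es = bf vac (mode_state md vac vs es)"
  by (simp add: Z0_def mode_state_def)

lemma mode_state_update_zero:
  assumes "\<And>v n. md v n 0 = 0" and "\<And>n w. md 0 n w = 0"
    and "k < length vs" and "k < length es"
  shows "mode_state md vac (vs[k := 0]) es = 0"
  using assms(3,4)
proof (induction vs arbitrary: es k)
  case Nil
  then show ?case by simp
next
  case (Cons v vs)
  then obtain e es' where "es = e # es'"
    by (cases es) auto
  with Cons assms(1,2) show ?case
    by (cases k) auto
qed

locale voa_with_form =
  fixes sc :: "complex \<Rightarrow> 'v::ab_group_add \<Rightarrow> 'v"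
    and md :: "'v \<Rightarrow> int \<Rightarrow> 'v \<Rightarrow> 'v"
    and vac om :: 'v and cc :: complex
    and bf :: "'v \<Rightarrow> 'v \<Rightarrow> complex"
  assumes VOA: "is_VOA sc md vac om cc"
    and LZ: "LZ_metric sc md vac om bf"
begin

lemma module_sc: "module sc"
  using VOA by (auto simp: is_VOA_def module_iff_vector_space)

lemma module_hom_md: "module_hom sc sc (md u n)"
  using VOA by (auto simp: is_VOA_def linear_iff_module_hom)

lemma module_hom_md_left: "module_hom sc sc (\<lambda>u. md u n v)"
  using VOA by (auto simp: is_VOA_def linear_iff_module_hom)

lemma module_hom_bf: "module_hom sc (*) (bf v)"
  using LZ by (auto simp: LZ_metric_def invariant_form_def linear_iff_module_hom)

lemma module_hom_bf_left: "module_hom sc (*) (\<lambda>v. bf v w)"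
  using LZ by (auto simp: LZ_metric_def invariant_form_def linear_iff_module_hom)

lemma md_zero_right [simp]: "md u n 0 = 0"
  using module_hom.zero[OF module_hom_md] .

lemma md_zero_left [simp]: "md 0 n v = 0"
  using module_hom.zero[OF module_hom_md_left] by simp

lemma bf_zero_right [simp]: "bf v 0 = 0"
  using module_hom.zero[OF module_hom_bf] .

lemma bf_zero_left [simp]: "bf 0 w = 0"
  using module_hom.zero[OF module_hom_bf_left] by simp

lemma sc_one [simp]: "sc 1 x = x"
  using module.scale_one[OF module_sc] .

lemma sc_zero_left [simp]: "sc 0 x = 0"
  using module.scale_zero_left[OF module_sc] .

lemma sc_zero_right [simp]: "sc c 0 = 0"
  using module.scale_zero_right[OF module_sc] .


lemmas md_sum = module_hom.sum[OF module_hom_md]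
lemmas md_scale = module_hom.scale[OF module_hom_md]
lemmas bf_sum = module_hom.sum[OF module_hom_bf]
lemmas bf_scale = module_hom.scale[OF module_hom_bf]

lemma mode_vac_eq_zero: "0 \<le> n \<Longrightarrow> md u n vac = 0"
  using VOA by (auto simp: is_VOA_def)

lemma eventually_mode_eq_zero: "eventually (\<lambda>j. md u (int j) v = 0) sequentially"
proof -
  have "\<exists>M::int. \<forall>n\<ge>M. md u n v = 0"
    using VOA by (simp add: is_VOA_def)
  then obtain M :: int where "\<forall>n\<ge>M. md u n v = 0" ..
  then show ?thesis
    unfolding eventually_sequentially by (intro exI[of _ "nat M"]) auto
qed

lemma mode_commutator:
  assumes "\<forall>i\<ge>M. md u (int i) v = 0"
  shows "md u p (md v q w) = md v q (md u p w)
     + (\<Sum>i<M. sc (of_int p gchoose i) (md (md u (int i) v) (p + q - int i) w))"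
proof -
  \<comment> \<open>the Borcherds identity at \<open>r = 0\<close>\<close>
  have "fsum (\<lambda>i::nat. sc (of_int p gchoose i) (md (md u (0 + int i) v) (p + q - int i) w)) =
        fsum (\<lambda>i::nat. sc ((-1) ^ i * (of_int 0 gchoose i))
               (md u (p + 0 - int i) (md v (q + int i) w)
                - sc ((-1::complex) powi 0) (md v (q + 0 - int i) (md u (p + int i) w))))"
    using VOA unfolding is_VOA_def by blast
  also have "\<dots> = md u p (md v q w) - md v q (md u p w)"
    by (subst fsum_eq_sum[of "{0}"]) (auto simp: gbinomial_0 gr0_conv_Suc)
  finally show ?thesis
    using assms by (subst (asm) fsum_eq_sum[of "{..<M}"]) (auto simp: algebra_simps)
qed

lemma mode_mode_state:
  assumes "length es = length vs" and "0 \<le> l"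
    and "\<forall>k<length vs. \<forall>j\<ge>M. md u (int j) (vs ! k) = 0"
  shows "md u l (mode_state md vac vs es) = (\<Sum>k<length vs. \<Sum>j<M. sc (of_int l gchoose j)
      (mode_state md vac (vs[k := md u (int j) (vs ! k)]) (es[k := es ! k - (l - int j)])))"
  using assms
proof (induction vs arbitrary: es)
  case Nil
  then show ?case by (simp add: mode_vac_eq_zero)
next
  case (Cons v vs)
  then obtain e es' where es: "es = e # es'" and len: "length es' = length vs"
    by (cases es) auto
  have "\<forall>i\<ge>M. md u (int i) v = 0"
    and tail: "\<forall>k<length vs. \<forall>j\<ge>M. md u (int j) (vs ! k) = 0"
    using Cons.prems(3) by auto
  then have "md u l (mode_state md vac (v # vs) (e # es')) =
      md v (- e - 1) (md u l (mode_state md vac vs es'))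
      + (\<Sum>j<M. sc (of_int l gchoose j) (md (md u (int j) v) (l + (- e - 1) - int j)
           (mode_state md vac vs es')))"
    by (simp add: mode_commutator)
  also have "md u l (mode_state md vac vs es') = (\<Sum>k<length vs. \<Sum>j<M. sc (of_int l gchoose j)
      (mode_state md vac (vs[k := md u (int j) (vs ! k)]) (es'[k := es' ! k - (l - int j)])))"
    by (rule Cons.IH[OF len Cons.prems(2) tail])
  finally show ?case
    unfolding es sum.lessThan_Suc_shift length_Cons
    by (simp add: md_sum md_scale algebra_simps)
qed

lemma bf_vac_mode_eq_zero:
  assumes u: "u \<in> wt_space sc md om N" and quasiprimary: "Vir md om 1 u = 0"
    and n: "n \<le> 2 * int N - 2"
  shows "bf vac (md u n w) = 0"
proof -
  have L1_powers: "(Vir md om 1 ^^ m) u = 0" if "m > 0" for m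
  proof -
    obtain m' where "m = Suc m'"
      using \<open>m > 0\<close> gr0_implies_Suc by blast
    moreover have "(Vir md om 1 ^^ m') 0 = 0"
      by (induction m') (simp_all add: Vir_def)
    ultimately show ?thesis
      by (simp only: funpow_Suc_right comp_apply quasiprimary)
  qed
  have "bf (md u (2 * int N - 2 - n) vac) w = (-1) ^ N * fsum (\<lambda>m::nat.
      bf vac (md ((Vir md om 1 ^^ m) u) (2 * int N - (2 * int N - 2 - n) - int m - 2) w)
        / of_nat (fact m))"
    using LZ u unfolding LZ_metric_def invariant_form_def by blast
  also have "\<dots> = (-1) ^ N * bf vac (md u n w)"
    by (subst fsum_eq_sum[of "{0}"]) (auto simp: L1_powers)
  finally show ?thesis
    using n by (simp add: mode_vac_eq_zero)
qed

end

lemma dy_psi0: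
  assumes "N \<ge> 1"
  shows "dy j (psi0 f N) p q =
    (if q = - p - 1 - int j \<and> 0 \<le> - p - 1 then of_int (- p - 1) gchoose j else 0)
    + (\<Sum>l\<le>2 * N - 2. if q = int l - int j then (of_nat l gchoose j) * f l p else 0)"
proof -
  have "(\<Sum>l\<le>2 * N - 2. if q = int l - int j then (of_nat l gchoose j) * f l p else 0) =
      (\<Sum>l\<le>2 * N - 2. if l = nat (q + int j) \<and> 0 \<le> q + int j
         then (of_int (q + int j) gchoose j) * f (nat (q + int j)) p else 0)"
    by (rule sum.cong) auto
  also have "\<dots> = (if 0 \<le> q + int j \<and> q + int j \<le> 2 * int N - 2
      then (of_int (q + int j) gchoose j) * f (nat (q + int j)) p else 0)"
    using assms by (auto simp: sum.delta' simp del: of_int_add)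
  moreover have "(of_int (q + int j) gchoose j) * inv_diff p (q + int j) =
      (if q = - p - 1 - int j \<and> 0 \<le> - p - 1 then of_int (- p - 1) gchoose j else 0)"
    by (cases "q = - p - 1 - int j") (auto simp: inv_diff_def)
  ultimately show ?thesis
    by (simp add: dy_def psi0_def distrib_left del: of_int_add)
qed

lemma mult_at_dy_psi0:
  assumes "N \<ge> 1"
  shows "mult_at k (dy j (psi0 f N)) H (p # es) =
    (if 0 \<le> - p - 1 then (of_int (- p - 1) gchoose j) * H (es[k := es ! k - (- p - 1 - int j)])
     else 0)
    + (\<Sum>l\<le>2 * N - 2. (of_nat l gchoose j) * f l p * H (es[k := es ! k - (int l - int j)]))"
proof -
  define S where "S = insert (- p - 1 - int j) ((\<lambda>l. int l - int j) ` {..2 * N - 2})"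
  let ?a = "\<lambda>q. (if q = - p - 1 - int j \<and> 0 \<le> - p - 1 then of_int (- p - 1) gchoose j else 0)
    * H (es[k := es ! k - q])"
  let ?b = "\<lambda>q l. (if q = int l - int j then (of_nat l gchoose j) * f l p else 0)
    * H (es[k := es ! k - q])"
  have "mult_at k (dy j (psi0 f N)) H (p # es) = fsum (\<lambda>q. ?a q + (\<Sum>l\<le>2 * N - 2. ?b q l))"
    by (simp add: mult_at_def dy_psi0[OF assms] distrib_right sum_distrib_right)
  also have "\<dots> = (\<Sum>q\<in>S. ?a q + (\<Sum>l\<le>2 * N - 2. ?b q l))"
    by (rule fsum_eq_sum) (auto simp: S_def image_iff intro!: sum.neutral)
  also have "\<dots> = (\<Sum>q\<in>S. ?a q) + (\<Sum>l\<le>2 * N - 2. \<Sum>q\<in>S. ?b q l)"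
    by (simp add: sum.distrib sum.swap[of _ S])
  also have "\<dots> = (if 0 \<le> - p - 1 then (of_int (- p - 1) gchoose j)
      * H (es[k := es ! k - (- p - 1 - int j)]) else 0)
    + (\<Sum>l\<le>2 * N - 2. (of_nat l gchoose j) * f l p * H (es[k := es ! k - (int l - int j)]))"
    by (simp add: S_def if_distrib[of "\<lambda>c. c * _"] sum.delta' cong: if_cong)
  finally show ?thesis .
qed

text \<open>Coefficient of \<open>y^es\<close> in
  \<open>\<Sum>_k \<Sum>_{j<M} \<partial>_{y_k}^(j) y_k^l Z(v_1,y_1; \<dots>; u(j)v_k,y_k; \<dots>; v_n,y_n)\<close>.\<close>
definition insertion_sum ::
  "('v \<Rightarrow> int \<Rightarrow> 'v \<Rightarrow> 'v) \<Rightarrow> 'v \<Rightarrow> ('v \<Rightarrow> 'v \<Rightarrow> complex) \<Rightarrow> 'v \<Rightarrow> nat \<Rightarrow> 'v list \<Rightarrow> int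
    \<Rightarrow> int list \<Rightarrow> complex" where
  "insertion_sum md vac bf u M vs l es = (\<Sum>k<length vs. \<Sum>j<M. (of_int l gchoose j) *
     Z0 md vac bf (vs[k := md u (int j) (vs ! k)]) (es[k := es ! k - (l - int j)]))"

context voa_with_form
begin

lemma bf_vac_mode_mode_state:
  assumes "length es = length vs" and "0 \<le> l"
    and "\<forall>k<length vs. \<forall>j\<ge>M. md u (int j) (vs ! k) = 0"
  shows "bf vac (md u l (mode_state md vac vs es)) = insertion_sum md vac bf u M vs l es"
  using assms by (simp add: mode_mode_state insertion_sum_def bf_sum bf_scale Z0_eq_mode_state)

lemma sum_mult_at_dy_psi0:
  assumes len: "length es = length vs" and "N \<ge> 1"
    and M: "\<forall>k<length vs. \<forall>j\<ge>M. md u (int j) (vs ! k) = 0"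
  shows "(\<Sum>k<length vs. fsum (\<lambda>j::nat.
      mult_at k (dy j (psi0 f N)) (Z0 md vac bf (vs[k := md u (int j) (vs ! k)])) (p # es))) =
    (if 0 \<le> - p - 1 then insertion_sum md vac bf u M vs (- p - 1) es else 0)
    + (\<Sum>l\<le>2 * N - 2. f l p * insertion_sum md vac bf u M vs (int l) es)"
proof -
  let ?Z = "\<lambda>k j l. Z0 md vac bf (vs[k := md u (int j) (vs ! k)]) (es[k := es ! k - (l - int j)])"
  have "fsum (\<lambda>j::nat. mult_at k (dy j (psi0 f N)) (Z0 md vac bf (vs[k := md u (int j) (vs ! k)]))
      (p # es)) =
    (\<Sum>j<M. (if 0 \<le> - p - 1 then (of_int (- p - 1) gchoose j) * ?Z k j (- p - 1) else 0)
      + (\<Sum>l\<le>2 * N - 2. f l p * ((of_nat l gchoose j) * ?Z k j (int l))))"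
    if "k < length vs" for k
  proof (subst fsum_eq_sum[of "{..<M}"])
    show "mult_at k (dy j (psi0 f N)) (Z0 md vac bf (vs[k := md u (int j) (vs ! k)])) (p # es) = 0"
      if "j \<notin> {..<M}" for j
      using \<open>k < length vs\<close> that M len
      by (auto simp: mult_at_def fsum_def Z0_eq_mode_state mode_state_update_zero[of md] not_less)
  qed (simp_all add: mult_at_dy_psi0[OF assms(2)] mult_ac)
  then have "(\<Sum>k<length vs. fsum (\<lambda>j::nat.
      mult_at k (dy j (psi0 f N)) (Z0 md vac bf (vs[k := md u (int j) (vs ! k)])) (p # es))) =
    (\<Sum>k<length vs. \<Sum>j<M. if 0 \<le> - p - 1 then (of_int (- p - 1) gchoose j) * ?Z k j (- p - 1) else 0)
      + (\<Sum>k<length vs. \<Sum>j<M. \<Sum>l\<le>2 * N - 2. f l p * ((of_nat l gchoose j) * ?Z k j (int l)))"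
    by (simp add: sum.distrib)
  also have "(\<Sum>k<length vs. \<Sum>j<M. \<Sum>l\<le>2 * N - 2. f l p * ((of_nat l gchoose j) * ?Z k j (int l)))
      = (\<Sum>l\<le>2 * N - 2. \<Sum>k<length vs. \<Sum>j<M. f l p * ((of_nat l gchoose j) * ?Z k j (int l)))"
    by (simp only: sum.swap[where B = "{..2 * N - 2}"])
  finally show ?thesis
    by (simp add: insertion_sum_def sum_distrib_left)
qed

end

theorem mainTheorem2:
  fixes sc :: "complex \<Rightarrow> 'v::ab_group_add \<Rightarrow> 'v"
    and md :: "'v \<Rightarrow> int \<Rightarrow> 'v \<Rightarrow> 'v"
    and vac om :: 'v and cc :: complex
    and bf :: "'v \<Rightarrow> 'v \<Rightarrow> complex"
    and u :: 'v and N :: nat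
    and f :: "nat \<Rightarrow> int \<Rightarrow> complex"
    and vs :: "'v list"
  assumes "is_VOA sc md vac om cc"
    and "strong_CFT_type sc md vac om"
    and "simple_VOA sc md"
    and "LZ_metric sc md vac om bf"
    and "N \<ge> 1"
    and "u \<in> wt_space sc md om N"
    and "Vir md om 1 u = 0"
    and "\<forall>l \<le> 2 * N - 2. \<exists>M. \<forall>p < M. f l p = 0"
  shows "\<forall>es. length es = Suc (length vs) \<longrightarrow>
           Z0 md vac bf (u # vs) es =
           (\<Sum>k < length vs. fsum (\<lambda>j::nat.
              mult_at k (dy j (psi0 f N)) (Z0 md vac bf (vs[k := md u (int j) (vs ! k)])) es))"
proof (intro allI impI)
  interpret voa_with_form sc md vac om cc bf
    using assms(1,4) by unfold_locales
  fix es :: "int list"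
  assume "length es = Suc (length vs)"
  then obtain p es' where es: "es = p # es'" and len: "length es' = length vs"
    by (cases es) auto
  have "eventually (\<lambda>j. \<forall>k\<in>{..<length vs}. md u (int j) (vs ! k) = 0) sequentially"
    by (intro eventually_ball_finite ballI eventually_mode_eq_zero) simp
  then obtain M where M: "\<forall>k<length vs. \<forall>j\<ge>M. md u (int j) (vs ! k) = 0"
    unfolding eventually_sequentially by auto
  let ?W = "mode_state md vac vs es'"
  have low_modes: "insertion_sum md vac bf u M vs (int l) es' = 0" if "l \<le> 2 * N - 2" for l
    using that assms(5) bf_vac_mode_mode_state[OF len _ M, of "int l"]
      bf_vac_mode_eq_zero[OF assms(6,7), of "int l" ?W]
    by simp
  have "bf vac (md u (- p - 1) ?W) =
      (if 0 \<le> - p - 1 then insertion_sum md vac bf u M vs (- p - 1) es' else 0)"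
    using assms(5) bf_vac_mode_mode_state[OF len _ M] bf_vac_mode_eq_zero[OF assms(6,7), of "- p - 1"]
    by auto
  then show "Z0 md vac bf (u # vs) es = (\<Sum>k < length vs. fsum (\<lambda>j::nat.
      mult_at k (dy j (psi0 f N)) (Z0 md vac bf (vs[k := md u (int j) (vs ! k)])) es))"
    by (simp add: es sum_mult_at_dy_psi0[OF len assms(5) M] low_modes Z0_eq_mode_state)
qed

end
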